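(* Let $c\in(0,1)$ and $C\ge1$ be constants such that for all $n\ge1$, all integers $0\le w\le cn$ and all integers $0\le i\le n/2$, $|K^{(n)}_w(i)|\le C\binom nw(1-\frac{2w}{n})^i$. Let $\mathcal{C}\subseteq\mathbb{F}_2^n$ be a binary linear $[n,k]$ code with $1\le k\le n-1$, generator matrix $G\in\mathbb{F}_2^{k\times n}$ (of rank $k$), and dual distance $d^\perp$; put $t^\perp=\lfloor(d^\perp-1)/2\rfloor$. Let $w$ be a nonnegative integer with $w\le cn$, let $\varepsilon>0$, and let $Z$ be a random vector on $\mathbb{F}_2^n$ with $d_{TV}(P_{GZ},P_{U_k})\le\varepsilon$. Then there exists $e\in\mathbb{F}_2^n$ with $|e|=w$ such that $$|\mathrm{bias}(e^\intercal Z)|\le\sqrt{\frac{|\mathcal{C}^\perp|V_n(t^\perp)}{2^{n+1}}}+\frac{\sqrt{Cn}}{2}\left(1-\frac{2w}{n}\right)^{t^\perp/2}+\sqrt{\frac\varepsilon2}.$$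
   Context: Krawtchouk polynomial: $K^{(n)}_w(i)=\sum_{j=0}^w(-1)^j\binom ij\binom{n-i}{w-j}$. The dual distance $d^\perp$ is the minimum Hamming weight of a nonzero vector of $\mathcal{C}^\perp$. $V_n(t)=\sum_{j=0}^t\binom nj$. For a $\{0,1\}$-valued random variable $\xi$, $\mathrm{bias}(\xi)=\frac12-\Pr(\xi=1)=\frac{\Pr(\xi=0)-\Pr(\xi=1)}{2}$. $P_{GZ}$ is the distribution of $GZ\in\mathbb{F}_2^k$, $P_{U_k}$ the uniform distribution on $\mathbb{F}_2^k$, and $d_{TV}(P,Q)=\frac12\sum_x|P(x)-Q(x)|$. $|e|$ denotes Hamming weight. *)

theory Defs
  imports "HOL-Probability.Probability"
begin

text \<open>Vectors of F_2^n are represented as functions nat => bool that vanish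
  outside {0..<n} (True = 1, False = 0).\<close>

definition F2vecs :: "nat \<Rightarrow> (nat \<Rightarrow> bool) set" where
  "F2vecs n = {x. \<forall>i. n \<le> i \<longrightarrow> \<not> x i}"

definition hweight :: "nat \<Rightarrow> (nat \<Rightarrow> bool) \<Rightarrow> nat" where
  "hweight n x = card {i. i < n \<and> x i}"

definition f2inner :: "nat \<Rightarrow> (nat \<Rightarrow> bool) \<Rightarrow> (nat \<Rightarrow> bool) \<Rightarrow> bool" where
  "f2inner n x y = odd (card {i. i < n \<and> x i \<and> y i})"

text \<open>G is a k x n matrix over F_2 (entries G i j, i<k, j<n).
  mat_vec: G z in F_2^k.  encode: the codeword m^T G for a message m in F_2^k.\<close>
definition mat_vec :: "nat \<Rightarrow> nat \<Rightarrow> (nat \<Rightarrow> nat \<Rightarrow> bool) \<Rightarrow> (nat \<Rightarrow> bool) \<Rightarrow> (nat \<Rightarrow> bool)" where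
  "mat_vec k n G z = (\<lambda>i. i < k \<and> odd (card {j. j < n \<and> G i j \<and> z j}))"

definition encode :: "nat \<Rightarrow> nat \<Rightarrow> (nat \<Rightarrow> nat \<Rightarrow> bool) \<Rightarrow> (nat \<Rightarrow> bool) \<Rightarrow> (nat \<Rightarrow> bool)" where
  "encode k n G m = (\<lambda>j. j < n \<and> odd (card {i. i < k \<and> m i \<and> G i j}))"

definition gen_code :: "nat \<Rightarrow> nat \<Rightarrow> (nat \<Rightarrow> nat \<Rightarrow> bool) \<Rightarrow> (nat \<Rightarrow> bool) set" where
  "gen_code k n G = encode k n G ` F2vecs k"

definition full_rank :: "nat \<Rightarrow> nat \<Rightarrow> (nat \<Rightarrow> nat \<Rightarrow> bool) \<Rightarrow> bool" where
  "full_rank k n G = (\<forall>m \<in> F2vecs k. encode k n G m = (\<lambda>_. False) \<longrightarrow> m = (\<lambda>_. False))"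

definition dual_code :: "nat \<Rightarrow> (nat \<Rightarrow> bool) set \<Rightarrow> (nat \<Rightarrow> bool) set" where
  "dual_code n C = {y \<in> F2vecs n. \<forall>x \<in> C. \<not> f2inner n x y}"

definition dual_distance :: "nat \<Rightarrow> (nat \<Rightarrow> bool) set \<Rightarrow> nat" where
  "dual_distance n C = Min (hweight n ` (dual_code n C - {\<lambda>_. False}))"

definition krawtchouk :: "nat \<Rightarrow> nat \<Rightarrow> nat \<Rightarrow> real" where
  "krawtchouk n w i = (\<Sum>j = 0..w. (-1) ^ j * real (i choose j) * real ((n - i) choose (w - j)))"

definition hamming_ball_vol :: "nat \<Rightarrow> nat \<Rightarrow> nat" where
  "hamming_ball_vol n t = (\<Sum>j = 0..t. n choose j)"

definition tv_dist_on :: "'a set \<Rightarrow> 'a pmf \<Rightarrow> 'a pmf \<Rightarrow> real" where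
  "tv_dist_on S P Q = (1/2) * (\<Sum>x\<in>S. \<bar>pmf P x - pmf Q x\<bar>)"

definition bias_inner :: "nat \<Rightarrow> (nat \<Rightarrow> bool) \<Rightarrow> (nat \<Rightarrow> bool) pmf \<Rightarrow> real" where
  "bias_inner n e Z = 1/2 - measure_pmf.prob Z {z. f2inner n e z}"

end

theory Submission
  imports Defs
begin

text \<open>Write \<open>\<chi>\<^sub>e(z) = (-1)^(e\<^sup>T z)\<close> and \<open>\<hat>Z(e) = E \<chi>\<^sub>e(Z) = 2 bias(e\<^sup>T Z)\<close>.
  Summing \<open>\<hat>Z(e)\<^sup>2\<close> over the sphere of weight \<open>w\<close> gives \<open>E K\<^sub>w(|Z + Z'|)\<close> for an
  independent copy \<open>Z'\<close>, since the character sum over the sphere at a vector of weight \<open>i\<close>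
  is the Krawtchouk value \<open>K\<^sub>w(i)\<close>. We split according to \<open>|Z + Z'|\<close>: if it is at most
  \<open>t\<close> or at least \<open>n - t\<close> we bound \<open>|K\<^sub>w|\<close> by \<open>binom n w\<close>; the probability of this event is
  at most \<open>2 (V\<^sub>n(t)/2^k + \<epsilon>)\<close>, because \<open>GZ'\<close> is \<open>\<epsilon>\<close>-close to uniform and only
  \<open>V\<^sub>n(t)\<close> values of \<open>G(Z + Z')\<close> are possible. Otherwise the Krawtchouk hypothesis (together
  with the symmetry \<open>|K\<^sub>w(n - i)| = |K\<^sub>w(i)|\<close>) gives \<open>C binom n w (1 - 2w/n)^t\<close>.
  Some \<open>e\<close> on the sphere is below average, and \<open>2^k \<ge> 2^n / |C\<^sup>\<bottom>|\<close> because the kernel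
  of \<open>G\<close> lies in the dual code.\<close>

section \<open>Arithmetic in \<open>F\<^sub>2\<^sup>n\<close>\<close>

definition f2_add :: "(nat \<Rightarrow> bool) \<Rightarrow> (nat \<Rightarrow> bool) \<Rightarrow> nat \<Rightarrow> bool" where
  "f2_add x y = (\<lambda>i. x i \<noteq> y i)"

definition f2_char :: "nat \<Rightarrow> (nat \<Rightarrow> bool) \<Rightarrow> (nat \<Rightarrow> bool) \<Rightarrow> real" where
  "f2_char n e z = (-1) ^ card {i. i < n \<and> e i \<and> z i}"

definition f2_supp :: "nat \<Rightarrow> (nat \<Rightarrow> bool) \<Rightarrow> nat set" where
  "f2_supp n x = {i. i < n \<and> x i}"

definition f2_compl :: "nat \<Rightarrow> (nat \<Rightarrow> bool) \<Rightarrow> nat \<Rightarrow> bool" where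
  "f2_compl n v = (\<lambda>i. i < n \<and> \<not> v i)"

definition weight_sphere :: "nat \<Rightarrow> nat \<Rightarrow> (nat \<Rightarrow> bool) set" where
  "weight_sphere n w = {e \<in> F2vecs n. hweight n e = w}"

lemma card_filter_neq:
  assumes "finite A"
  shows "card {i\<in>A. P i \<noteq> Q i} + 2 * card {i\<in>A. P i \<and> Q i} = card {i\<in>A. P i} + card {i\<in>A. Q i}"
proof -
  have "card {i\<in>A. P i} = card {i\<in>A. P i \<and> Q i} + card {i\<in>A. P i \<and> \<not> Q i}"
    and "card {i\<in>A. Q i} = card {i\<in>A. P i \<and> Q i} + card {i\<in>A. \<not> P i \<and> Q i}"
    and "card {i\<in>A. P i \<noteq> Q i} = card {i\<in>A. P i \<and> \<not> Q i} + card {i\<in>A. \<not> P i \<and> Q i}"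
    using assms by (subst card_Un_disjoint[symmetric]; auto intro: arg_cong[where f = card])+
  then show ?thesis by simp
qed

lemma odd_card_filter_neq_iff:
  assumes "finite A"
  shows "odd (card {i\<in>A. P i \<noteq> Q i}) \<longleftrightarrow> odd (card {i\<in>A. P i}) \<noteq> odd (card {i\<in>A. Q i})"
proof -
  have "even (card {i\<in>A. P i \<noteq> Q i}) = even (card {i\<in>A. P i \<noteq> Q i} + 2 * card {i\<in>A. P i \<and> Q i})"
    by simp
  then show ?thesis unfolding card_filter_neq[OF assms] by auto
qed

lemma f2_char_add: "f2_char n e (f2_add x y) = f2_char n e x * f2_char n e y"
proof -
  let ?A = "{i. i < n \<and> e i}"
  have fA: "finite ?A" by simp
  have "f2_char n e (f2_add x y) = (-1) ^ card {i\<in>?A. x i \<noteq> y i}"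
    unfolding f2_char_def f2_add_def by (simp add: conj_assoc)
  also have "\<dots> = (-1) ^ (card {i\<in>?A. x i \<noteq> y i} + 2 * card {i\<in>?A. x i \<and> y i})"
    by (simp add: power_add)
  also have "\<dots> = (-1) ^ (card {i\<in>?A. x i} + card {i\<in>?A. y i})"
    unfolding card_filter_neq[OF fA] ..
  also have "\<dots> = f2_char n e x * f2_char n e y"
    unfolding f2_char_def by (simp add: power_add conj_assoc)
  finally show ?thesis .
qed

lemma mat_vec_add: "mat_vec k n G (f2_add x y) = f2_add (mat_vec k n G x) (mat_vec k n G y)"
proof
  fix i
  let ?A = "{j. j < n \<and> G i j}"
  have "{j. j < n \<and> G i j \<and> f2_add x y j} = {j\<in>?A. x j \<noteq> y j}"
    "{j. j < n \<and> G i j \<and> x j} = {j\<in>?A. x j}" "{j. j < n \<and> G i j \<and> y j} = {j\<in>?A. y j}"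
    by (auto simp: f2_add_def)
  then show "mat_vec k n G (f2_add x y) i = f2_add (mat_vec k n G x) (mat_vec k n G y) i"
    unfolding mat_vec_def f2_add_def using odd_card_filter_neq_iff[of ?A] by auto
qed

lemma f2_add_in_F2vecs: "x \<in> F2vecs n \<Longrightarrow> y \<in> F2vecs n \<Longrightarrow> f2_add x y \<in> F2vecs n"
  by (auto simp: F2vecs_def f2_add_def)

lemma mat_vec_in_F2vecs: "mat_vec k n G x \<in> F2vecs k"
  by (auto simp: F2vecs_def mat_vec_def)

lemma f2_add_cancel: "f2_add (f2_add x y) y = x"
  by (auto simp: f2_add_def)

lemma bij_betw_f2_supp: "bij_betw (f2_supp n) (F2vecs n) (Pow {..<n})"
proof (rule bij_betw_byWitness[where f' = "\<lambda>A i. i \<in> A"])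
  show "\<forall>x\<in>F2vecs n. (\<lambda>i. i \<in> f2_supp n x) = x"
    by (auto simp: F2vecs_def f2_supp_def fun_eq_iff) (meson not_le)
qed (auto simp: f2_supp_def F2vecs_def)

lemma finite_F2vecs: "finite (F2vecs n)"
  using bij_betw_finite[OF bij_betw_f2_supp] by simp

lemma card_F2vecs: "card (F2vecs n) = 2 ^ n"
  using bij_betw_same_card[OF bij_betw_f2_supp] card_Pow[of "{..<n}"] by simp

lemma f2_supp_weight_sphere: "f2_supp n ` weight_sphere n w = {A. A \<subseteq> {..<n} \<and> card A = w}"
proof -
  have "f2_supp n ` weight_sphere n w = f2_supp n ` {x\<in>F2vecs n. card (f2_supp n x) = w}"
    by (simp add: weight_sphere_def hweight_def f2_supp_def)
  also have "\<dots> = {A \<in> f2_supp n ` F2vecs n. card A = w}"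
    by blast
  also have "f2_supp n ` F2vecs n = Pow {..<n}"
    using bij_betw_f2_supp by (rule bij_betw_imp_surj_on)
  finally show ?thesis by auto
qed

lemma inj_on_f2_supp_weight_sphere: "inj_on (f2_supp n) (weight_sphere n w)"
  using bij_betw_f2_supp by (auto simp: bij_betw_def weight_sphere_def intro: inj_on_subset)

lemma card_weight_sphere: "card (weight_sphere n w) = n choose w"
  using card_image[OF inj_on_f2_supp_weight_sphere, of n w] n_subsets[of "{..<n}" w]
  by (simp add: f2_supp_weight_sphere)

lemma card_hamming_ball_le: "card {v\<in>F2vecs n. hweight n v \<le> t} \<le> hamming_ball_vol n t"
proof -
  have "{v\<in>F2vecs n. hweight n v \<le> t} = (\<Union>j\<in>{0..t}. weight_sphere n j)"
    by (auto simp: weight_sphere_def)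
  then show ?thesis
    using card_UN_le[of "{0..t}" "weight_sphere n"] by (simp add: card_weight_sphere hamming_ball_vol_def)
qed

lemma f2_compl_in_F2vecs: "f2_compl n v \<in> F2vecs n"
  by (auto simp: f2_compl_def F2vecs_def)

lemma f2_compl_f2_compl: "v \<in> F2vecs n \<Longrightarrow> f2_compl n (f2_compl n v) = v"
  by (auto simp: f2_compl_def F2vecs_def fun_eq_iff) (meson not_le)

lemma hweight_le: "hweight n v \<le> n"
  unfolding hweight_def using card_mono[of "{..<n}" "{i. i < n \<and> v i}"] by auto

lemma hweight_f2_compl: "hweight n (f2_compl n v) = n - hweight n v"
proof -
  have "{i. i < n \<and> f2_compl n v i} = {..<n} - {i. i < n \<and> v i}"
    by (auto simp: f2_compl_def)
  then show ?thesis by (simp add: hweight_def card_Diff_subset subset_eq)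
qed

lemma card_hamming_ball_compl_le: "card {v\<in>F2vecs n. n - t \<le> hweight n v} \<le> hamming_ball_vol n t"
proof -
  let ?A = "{v\<in>F2vecs n. n - t \<le> hweight n v}" and ?B = "{v\<in>F2vecs n. hweight n v \<le> t}"
  have "?A \<subseteq> f2_compl n ` ?B"
  proof
    fix v assume v: "v \<in> ?A"
    then have "f2_compl n v \<in> ?B"
      by (auto simp: f2_compl_in_F2vecs hweight_f2_compl)
    moreover have "v = f2_compl n (f2_compl n v)"
      using v by (simp add: f2_compl_f2_compl)
    ultimately show "v \<in> f2_compl n ` ?B" by blast
  qed
  then have "card ?A \<le> card (f2_compl n ` ?B)"
    by (rule card_mono[rotated]) (simp add: finite_F2vecs)
  also have "\<dots> \<le> card ?B"
    by (rule card_image_le) (simp add: finite_F2vecs)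
  finally show ?thesis using card_hamming_ball_le[of n t] by linarith
qed

section \<open>Krawtchouk polynomials as character sums\<close>

definition sphere_char_sum :: "nat \<Rightarrow> nat \<Rightarrow> (nat \<Rightarrow> bool) \<Rightarrow> real" where
  "sphere_char_sum n w v = (\<Sum>e\<in>weight_sphere n w. f2_char n e v)"

lemma card_subsets_with_inter:
  assumes U: "finite U" and X: "X \<subseteq> U" and j: "j \<le> w"
  shows "card {E. E \<subseteq> U \<and> card E = w \<and> card (E \<inter> X) = j}
       = (card X choose j) * (card (U - X) choose (w - j))"
proof -
  have fX: "finite X" using U X finite_subset by blast
  have "bij_betw (\<lambda>(A, B). A \<union> B)
      ({A. A \<subseteq> X \<and> card A = j} \<times> {B. B \<subseteq> U - X \<and> card B = w - j})
      {E. E \<subseteq> U \<and> card E = w \<and> card (E \<inter> X) = j}"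
  proof (rule bij_betw_byWitness[where f' = "\<lambda>E. (E \<inter> X, E - X)"])
    show "\<forall>p\<in>{A. A \<subseteq> X \<and> card A = j} \<times> {B. B \<subseteq> U - X \<and> card B = w - j}.
        (\<lambda>E. (E \<inter> X, E - X)) ((\<lambda>(A, B). A \<union> B) p) = p"
      by auto
    show "\<forall>E\<in>{E. E \<subseteq> U \<and> card E = w \<and> card (E \<inter> X) = j}.
        (case (E \<inter> X, E - X) of (A, B) \<Rightarrow> A \<union> B) = E"
      by auto
    show "(\<lambda>(A, B). A \<union> B) ` ({A. A \<subseteq> X \<and> card A = j} \<times> {B. B \<subseteq> U - X \<and> card B = w - j})
      \<subseteq> {E. E \<subseteq> U \<and> card E = w \<and> card (E \<inter> X) = j}"
    proof clarify
      fix A B assume A: "A \<subseteq> X" "j = card A" and B: "B \<subseteq> U - X" "card B = w - card A"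
      have "card (A \<union> B) = card A + card B"
        using A B U fX by (intro card_Un_disjoint) (auto intro: finite_subset)
      moreover have "(A \<union> B) \<inter> X = A" using A B by auto
      ultimately show "A \<union> B \<subseteq> U \<and> card (A \<union> B) = w \<and> card ((A \<union> B) \<inter> X) = card A"
        using A B j X by auto
    qed
    show "(\<lambda>E. (E \<inter> X, E - X)) ` {E. E \<subseteq> U \<and> card E = w \<and> card (E \<inter> X) = j}
      \<subseteq> {A. A \<subseteq> X \<and> card A = j} \<times> {B. B \<subseteq> U - X \<and> card B = w - j}"
    proof
      fix p assume "p \<in> (\<lambda>E. (E \<inter> X, E - X)) ` {E. E \<subseteq> U \<and> card E = w \<and> card (E \<inter> X) = j}"
      then obtain E where E: "E \<subseteq> U" "card E = w" "card (E \<inter> X) = j" and p: "p = (E \<inter> X, E - X)"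
        by auto
      have "card (E - X) = card E - card (E \<inter> X)"
        using E U by (intro card_Diff_subset_Int) (auto intro: finite_subset)
      then show "p \<in> {A. A \<subseteq> X \<and> card A = j} \<times> {B. B \<subseteq> U - X \<and> card B = w - j}"
        using E p by auto
    qed
  qed
  from bij_betw_same_card[OF this] show ?thesis
    using fX U by (simp add: card_cartesian_product n_subsets)
qed

lemma sum_subsets_neg_one_pow_card_inter:
  assumes U: "finite U" and X: "X \<subseteq> U"
  shows "(\<Sum>E | E \<subseteq> U \<and> card E = w. (-1::real) ^ card (E \<inter> X))
     = (\<Sum>j = 0..w. (-1) ^ j * real (card X choose j) * real ((card U - card X) choose (w - j)))"
proof -
  let ?W = "{E. E \<subseteq> U \<and> card E = w}"
  have img: "(\<lambda>E. card (E \<inter> X)) ` ?W \<subseteq> {0..w}"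
    using U by (auto simp: card_mono finite_subset)
  have "(\<Sum>E\<in>?W. (-1::real) ^ card (E \<inter> X)) =
     (\<Sum>j = 0..w. \<Sum>E | E \<in> ?W \<and> card (E \<inter> X) = j. (-1::real) ^ card (E \<inter> X))"
    using sum.group[OF _ _ img, of "\<lambda>E. (-1::real) ^ card (E \<inter> X)"] U by simp
  also have "\<dots> = (\<Sum>j = 0..w. (-1) ^ j * real (card X choose j) * real ((card U - card X) choose (w - j)))"
  proof (rule sum.cong[OF refl])
    fix j assume j: "j \<in> {0..w}"
    have "{E. E \<in> ?W \<and> card (E \<inter> X) = j} = {E. E \<subseteq> U \<and> card E = w \<and> card (E \<inter> X) = j}"
      by auto
    moreover have "card (U - X) = card U - card X"
      using U X by (simp add: card_Diff_subset finite_subset)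
    ultimately show "(\<Sum>E | E \<in> ?W \<and> card (E \<inter> X) = j. (-1::real) ^ card (E \<inter> X))
       = (-1) ^ j * real (card X choose j) * real ((card U - card X) choose (w - j))"
      using card_subsets_with_inter[OF U X, of j w] j by simp
  qed
  finally show ?thesis by simp
qed

lemma sphere_char_sum_eq_krawtchouk: "sphere_char_sum n w v = krawtchouk n w (hweight n v)"
proof -
  have char: "f2_char n e v = (-1) ^ card (f2_supp n e \<inter> f2_supp n v)" for e
  proof -
    have "{i. i < n \<and> e i \<and> v i} = f2_supp n e \<inter> f2_supp n v"
      by (auto simp: f2_supp_def)
    then show ?thesis by (simp add: f2_char_def)
  qed
  have "sphere_char_sum n w v = (\<Sum>E\<in>f2_supp n ` weight_sphere n w. (-1::real) ^ card (E \<inter> f2_supp n v))"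
    unfolding sphere_char_sum_def char by (simp add: sum.reindex[OF inj_on_f2_supp_weight_sphere])
  also have "\<dots> = krawtchouk n w (card (f2_supp n v))"
    unfolding f2_supp_weight_sphere krawtchouk_def
    by (subst sum_subsets_neg_one_pow_card_inter) (auto simp: f2_supp_def)
  finally show ?thesis by (simp add: hweight_def f2_supp_def)
qed

lemma abs_sphere_char_sum_le: "\<bar>sphere_char_sum n w v\<bar> \<le> real (n choose w)"
proof -
  have "\<bar>sphere_char_sum n w v\<bar> \<le> (\<Sum>e\<in>weight_sphere n w. \<bar>f2_char n e v\<bar>)"
    unfolding sphere_char_sum_def by (rule sum_abs)
  also have "\<dots> = real (n choose w)" by (simp add: f2_char_def card_weight_sphere)
  finally show ?thesis .
qed

lemma sphere_char_sum_f2_compl: "sphere_char_sum n w (f2_compl n v) = (-1) ^ w * sphere_char_sum n w v"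
proof -
  have "f2_char n e (f2_compl n v) = (-1) ^ w * f2_char n e v" if e: "e \<in> weight_sphere n w" for e
  proof -
    have "f2_char n e (f2_compl n v) = f2_char n e (f2_add v (\<lambda>i. i < n))"
      unfolding f2_char_def f2_compl_def f2_add_def
      by (rule arg_cong[where f = "\<lambda>A. (-1) ^ card A"]) auto
    moreover have "f2_char n e (\<lambda>i. i < n) = (-1) ^ w"
    proof -
      have "{i. i < n \<and> e i \<and> i < n} = {i. i < n \<and> e i}" by auto
      then show ?thesis using e by (simp add: f2_char_def weight_sphere_def hweight_def)
    qed
    ultimately show ?thesis by (simp add: f2_char_add)
  qed
  then show ?thesis unfolding sphere_char_sum_def by (simp add: sum_distrib_left)
qed

lemma abs_sphere_char_sum_le_middle:
  fixes q C :: real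
  assumes kr: "\<And>i. real i \<le> real n / 2 \<Longrightarrow> \<bar>krawtchouk n w i\<bar> \<le> C * real (n choose w) * q ^ i"
    and q: "0 \<le> q" "q \<le> 1" and C: "0 \<le> C"
    and lo: "t < hweight n v" and hi: "hweight n v < n - t"
  shows "\<bar>sphere_char_sum n w v\<bar> \<le> C * real (n choose w) * q ^ t"
proof -
  have decr: "C * real (n choose w) * q ^ i \<le> C * real (n choose w) * q ^ t" if "t \<le> i" for i
    using C q that by (intro mult_left_mono power_decreasing) auto
  show ?thesis
  proof (cases "real (hweight n v) \<le> real n / 2")
    case True
    then show ?thesis
      using kr[OF True] decr[of "hweight n v"] lo by (simp add: sphere_char_sum_eq_krawtchouk)
  next
    case False
    have "real (hweight n (f2_compl n v)) \<le> real n / 2"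
      using False hweight_le[of n v] by (simp add: hweight_f2_compl of_nat_diff)
    then have "\<bar>sphere_char_sum n w (f2_compl n v)\<bar> \<le> C * real (n choose w) * q ^ hweight n (f2_compl n v)"
      using kr by (simp add: sphere_char_sum_eq_krawtchouk)
    moreover have "t \<le> hweight n (f2_compl n v)"
      using hi by (simp add: hweight_f2_compl)
    ultimately show ?thesis
      using decr[of "hweight n (f2_compl n v)"] by (simp add: sphere_char_sum_f2_compl abs_mult)
  qed
qed

lemma sphere_char_sum_le_split:
  fixes q C :: real
  assumes kr: "\<And>i. real i \<le> real n / 2 \<Longrightarrow> \<bar>krawtchouk n w i\<bar> \<le> C * real (n choose w) * q ^ i"
    and q: "0 \<le> q" "q \<le> 1" and C: "0 \<le> C"
  shows "sphere_char_sum n w v \<le> real (n choose w) * of_bool (hweight n v \<le> t)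
    + real (n choose w) * of_bool (n - t \<le> hweight n v) + C * real (n choose w) * q ^ t"
proof (cases "hweight n v \<le> t \<or> n - t \<le> hweight n v")
  case True
  then show ?thesis using abs_sphere_char_sum_le[of n w v] C q by (auto intro: add_increasing2)
next
  case False
  then show ?thesis using abs_sphere_char_sum_le_middle[OF kr q C, of t v] by auto
qed

section \<open>Size of the dual code\<close>

lemma even_card_filter_odd_iff:
  assumes "finite A"
  shows "even (card {j\<in>A. odd (f j :: nat)}) \<longleftrightarrow> even (\<Sum>j\<in>A. f j)"
  using assms
proof (induction A rule: finite_induct)
  case (insert a A)
  have "{j\<in>insert a A. odd (f j)} = (if odd (f a) then insert a {j\<in>A. odd (f j)} else {j\<in>A. odd (f j)})"
    by auto
  then show ?case using insert by (auto simp: card_insert_if)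
qed simp

lemma kernel_subset_dual_code:
  assumes v: "v \<in> F2vecs n" and ker: "mat_vec k n G v = (\<lambda>_. False)"
  shows "v \<in> dual_code n (gen_code k n G)"
proof -
  have "\<not> f2inner n (encode k n G m) v" for m
  proof -
    let ?I = "{i. i < k \<and> m i}" and ?J = "{j. j < n \<and> v j}"
    let ?c = "\<lambda>j. card {i\<in>?I. G i j}"
    have card_filter: "finite A \<Longrightarrow> card {x\<in>A. P x} = (\<Sum>x\<in>A. of_bool (P x))" for A and P :: "nat \<Rightarrow> bool"
      by (simp add: sum.If_cases Int_def conj_commute)
    have "(\<Sum>j\<in>?J. ?c j) = (\<Sum>j\<in>?J. \<Sum>i\<in>?I. of_bool (G i j))"
      by (rule sum.cong[OF refl], rule card_filter) simp
    also have "\<dots> = (\<Sum>i\<in>?I. \<Sum>j\<in>?J. of_bool (G i j))"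
      by (rule sum.swap)
    also have "\<dots> = (\<Sum>i\<in>?I. card {j\<in>?J. G i j})"
      by (rule sum.cong[OF refl], rule card_filter[symmetric]) simp
    finally have double_count: "(\<Sum>j\<in>?J. ?c j) = (\<Sum>i\<in>?I. card {j\<in>?J. G i j})" .
    have rows_even: "even (card {j\<in>?J. G i j})" if "i \<in> ?I" for i
    proof -
      have "{j. j < n \<and> G i j \<and> v j} = {j\<in>?J. G i j}" by auto
      then show ?thesis using that fun_cong[OF ker, of i] unfolding mat_vec_def by auto
    qed
    have "even (\<Sum>i\<in>?I. card {j\<in>?J. G i j})"
      using rows_even by (rule dvd_sum)
    then have "even (card {j\<in>?J. odd (?c j)})"
      using even_card_filter_odd_iff[of ?J ?c] double_count by simp
    moreover have "{i. i < n \<and> encode k n G m i \<and> v i} = {j\<in>?J. odd (?c j)}"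
      unfolding encode_def by (auto intro!: arg_cong[where f = "\<lambda>A. odd (card A)"])
    ultimately show ?thesis unfolding f2inner_def by simp
  qed
  then show ?thesis using v unfolding dual_code_def gen_code_def by auto
qed

lemma card_fibre_mat_vec_le_kernel:
  "card {x\<in>F2vecs n. mat_vec k n G x = y} \<le> card {v\<in>F2vecs n. mat_vec k n G v = (\<lambda>_. False)}"
proof (cases "{x\<in>F2vecs n. mat_vec k n G x = y} = {}")
  case True
  then show ?thesis unfolding True by simp
next
  case False
  then obtain x0 where x0: "x0 \<in> F2vecs n" "mat_vec k n G x0 = y" by auto
  have "inj_on (\<lambda>x. f2_add x x0) {x\<in>F2vecs n. mat_vec k n G x = y}"
    by (rule inj_onI) (metis f2_add_cancel)
  moreover have "(\<lambda>x. f2_add x x0) ` {x\<in>F2vecs n. mat_vec k n G x = y}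
      \<subseteq> {v\<in>F2vecs n. mat_vec k n G v = (\<lambda>_. False)}"
    using x0 by (auto simp: f2_add_in_F2vecs mat_vec_add) (simp add: f2_add_def)
  ultimately show ?thesis by (rule card_inj_on_le) (simp add: finite_F2vecs)
qed

lemma two_pow_le_card_dual_code: "2 ^ n \<le> card (dual_code n (gen_code k n G)) * 2 ^ k"
proof -
  let ?f = "mat_vec k n G"
  let ?K = "{v\<in>F2vecs n. ?f v = (\<lambda>_. False)}"
  have fibres: "F2vecs n = (\<Union>y\<in>?f ` F2vecs n. {x\<in>F2vecs n. ?f x = y})" by auto
  have "card (F2vecs n) \<le> (\<Sum>y\<in>?f ` F2vecs n. card {x\<in>F2vecs n. ?f x = y})"
    by (subst fibres) (rule card_UN_le, rule finite_imageI, rule finite_F2vecs)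
  also have "\<dots> \<le> (\<Sum>y\<in>?f ` F2vecs n. card ?K)"
    by (rule sum_mono) (rule card_fibre_mat_vec_le_kernel)
  also have "\<dots> = card (?f ` F2vecs n) * card ?K"
    by simp
  also have "\<dots> \<le> card (F2vecs k) * card (dual_code n (gen_code k n G))"
  proof (rule mult_mono)
    show "card (?f ` F2vecs n) \<le> card (F2vecs k)"
      by (rule card_mono[OF finite_F2vecs]) (auto intro: mat_vec_in_F2vecs)
    show "card ?K \<le> card (dual_code n (gen_code k n G))"
      using kernel_subset_dual_code finite_F2vecs
      by (intro card_mono) (auto simp: dual_code_def intro: finite_subset)
  qed auto
  finally show ?thesis by (simp add: card_F2vecs mult.commute)
qed

lemma prob_eq_sum_pmf:
  assumes "finite S" "set_pmf Z \<subseteq> S"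
  shows "measure_pmf.prob Z A = (\<Sum>z\<in>S \<inter> A. pmf Z z)"
proof -
  have "(S \<inter> A) \<inter> set_pmf Z = A \<inter> set_pmf Z"
    using assms(2) by auto
  then have "measure_pmf.prob Z A = measure_pmf.prob Z ((S \<inter> A) \<inter> set_pmf Z)"
    by (simp add: measure_Int_set_pmf)
  also have "\<dots> = (\<Sum>z\<in>S \<inter> A. pmf Z z)"
    using assms(1) by (simp add: measure_Int_set_pmf measure_measure_pmf_finite)
  finally show ?thesis .
qed

lemma sum_pmf_diff_le_tv_dist_on:
  assumes S: "finite S" and P: "set_pmf P \<subseteq> S" and Q: "set_pmf Q \<subseteq> S" and T: "T \<subseteq> S"
  shows "(\<Sum>x\<in>T. pmf P x) - (\<Sum>x\<in>T. pmf Q x) \<le> tv_dist_on S P Q"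
proof -
  let ?d = "\<lambda>x. pmf P x - pmf Q x"
  have split: "(\<Sum>x\<in>S. f x) = (\<Sum>x\<in>T. f x) + (\<Sum>x\<in>S-T. f x)" for f :: "'a \<Rightarrow> real"
    using sum.subset_diff[OF T S, of f] by (simp add: add.commute)
  have "(\<Sum>x\<in>T. ?d x) + (\<Sum>x\<in>S-T. ?d x) = 0"
    using split[of ?d] sum_pmf_eq_1[OF S P] sum_pmf_eq_1[OF S Q] by (simp add: sum_subtractf)
  moreover have "(\<Sum>x\<in>T. ?d x) \<le> (\<Sum>x\<in>T. \<bar>?d x\<bar>)"
    by (rule sum_mono) simp
  moreover have "- (\<Sum>x\<in>S-T. ?d x) \<le> (\<Sum>x\<in>S-T. \<bar>?d x\<bar>)"
    unfolding sum_negf[symmetric] by (rule sum_mono) simp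
  ultimately show ?thesis
    using split[of "\<lambda>x. \<bar>?d x\<bar>"] unfolding tv_dist_on_def by (simp add: sum_subtractf)
qed

lemma prob_mat_vec_preimage_le:
  assumes tv: "tv_dist_on (F2vecs k) (map_pmf (mat_vec k n G) Z) (pmf_of_set (F2vecs k)) \<le> \<epsilon>"
    and T: "T \<subseteq> F2vecs k"
  shows "measure_pmf.prob Z (mat_vec k n G -` T) \<le> real (card T) / 2 ^ k + \<epsilon>"
proof -
  let ?P = "map_pmf (mat_vec k n G) Z" and ?U = "pmf_of_set (F2vecs k)"
  have ne: "F2vecs k \<noteq> {}" using card_F2vecs[of k] by auto
  have fT: "finite T" using T finite_F2vecs finite_subset by blast
  have sP: "set_pmf ?P \<subseteq> F2vecs k" and sU: "set_pmf ?U \<subseteq> F2vecs k"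
    using ne by (auto simp: mat_vec_in_F2vecs finite_F2vecs)
  have "measure_pmf.prob Z (mat_vec k n G -` T) = (\<Sum>x\<in>T. pmf ?P x)"
    using fT by (simp add: measure_measure_pmf_finite[symmetric])
  also have "\<dots> \<le> (\<Sum>x\<in>T. pmf ?U x) + \<epsilon>"
    using sum_pmf_diff_le_tv_dist_on[OF finite_F2vecs sP sU T] tv by linarith
  also have "(\<Sum>x\<in>T. pmf ?U x) = real (card T) / 2 ^ k"
    using T ne by (simp add: finite_F2vecs card_F2vecs subset_eq)
  finally show ?thesis .
qed

text \<open>The probability that \<open>Z + Z'\<close> lands in \<open>R\<close>, for an independent copy \<open>Z'\<close>: given
  \<open>Z = z\<close>, the event forces \<open>GZ'\<close> into the translate \<open>Gz + G R\<close> of size at most \<open>|R|\<close>.\<close>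

lemma pair_prob_f2_add_in_le:
  assumes tv: "tv_dist_on (F2vecs k) (map_pmf (mat_vec k n G) Z) (pmf_of_set (F2vecs k)) \<le> \<epsilon>"
    and Z_vec: "set_pmf Z \<subseteq> F2vecs n" and R: "R \<subseteq> F2vecs n" and card_R: "real (card R) \<le> V"
  shows "(\<Sum>z\<in>F2vecs n. \<Sum>z'\<in>F2vecs n. pmf Z z * pmf Z z' * of_bool (f2_add z z' \<in> R))
     \<le> V / 2 ^ k + \<epsilon>"
proof -
  let ?S = "F2vecs n" and ?m = "mat_vec k n G"
  have inner: "(\<Sum>z'\<in>?S. pmf Z z' * of_bool (f2_add z z' \<in> R)) \<le> V / 2 ^ k + \<epsilon>" for z
  proof -
    let ?T = "f2_add (?m z) ` ?m ` R"
    have "z' \<in> ?m -` ?T" if "f2_add z z' \<in> R" for z'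
    proof -
      have "?m z' = f2_add (?m z) (?m (f2_add z z'))"
        unfolding mat_vec_add by (auto simp: f2_add_def)
      then show ?thesis using that by auto
    qed
    then have "(\<Sum>z'\<in>?S. pmf Z z' * of_bool (f2_add z z' \<in> R)) \<le> (\<Sum>z'\<in>?S \<inter> ?m -` ?T. pmf Z z')"
      by (auto simp: sum.inter_filter finite_F2vecs Int_def intro!: sum_mono)
    also have "\<dots> = measure_pmf.prob Z (?m -` ?T)"
      by (rule prob_eq_sum_pmf[OF finite_F2vecs Z_vec, symmetric])
    also have "\<dots> \<le> real (card ?T) / 2 ^ k + \<epsilon>"
      by (rule prob_mat_vec_preimage_le[OF tv]) (auto intro!: f2_add_in_F2vecs mat_vec_in_F2vecs)
    also have "\<dots> \<le> V / 2 ^ k + \<epsilon>"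
    proof -
      have fin_R: "finite R" using R finite_F2vecs finite_subset by blast
      have "card ?T \<le> card (?m ` R)"
        using fin_R by (intro card_image_le finite_imageI)
      also have "\<dots> \<le> card R"
        using fin_R by (rule card_image_le)
      finally show ?thesis using card_R by (simp add: divide_right_mono)
    qed
    finally show ?thesis .
  qed
  have "(\<Sum>z\<in>?S. \<Sum>z'\<in>?S. pmf Z z * pmf Z z' * of_bool (f2_add z z' \<in> R))
      = (\<Sum>z\<in>?S. pmf Z z * (\<Sum>z'\<in>?S. pmf Z z' * of_bool (f2_add z z' \<in> R)))"
    by (simp add: sum_distrib_left mult.assoc)
  also have "\<dots> \<le> (\<Sum>z\<in>?S. pmf Z z * (V / 2 ^ k + \<epsilon>))"
    by (intro sum_mono mult_left_mono inner) simp
  also have "\<dots> = V / 2 ^ k + \<epsilon>"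
    using sum_pmf_eq_1[OF finite_F2vecs Z_vec] by (simp add: sum_distrib_right[symmetric])
  finally show ?thesis .
qed

section \<open>Fourier coefficients of the distribution\<close>

definition fourier_coeff :: "nat \<Rightarrow> (nat \<Rightarrow> bool) pmf \<Rightarrow> (nat \<Rightarrow> bool) \<Rightarrow> real" where
  "fourier_coeff n Z e = (\<Sum>z\<in>F2vecs n. pmf Z z * f2_char n e z)"

lemma bias_inner_eq_fourier_coeff:
  assumes Z: "set_pmf Z \<subseteq> F2vecs n"
  shows "bias_inner n e Z = fourier_coeff n Z e / 2"
proof -
  let ?S = "F2vecs n" and ?f = "f2inner n e"
  have "measure_pmf.prob Z {z. ?f z} = (\<Sum>z\<in>{z\<in>?S. ?f z}. pmf Z z)"
    unfolding prob_eq_sum_pmf[OF finite_F2vecs Z] by (simp add: Int_def)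
  also have "\<dots> = (\<Sum>z\<in>?S. pmf Z z * of_bool (?f z))"
    unfolding sum.inter_filter[OF finite_F2vecs] by (intro sum.cong) auto
  moreover have "pmf Z z * f2_char n e z = pmf Z z - 2 * (pmf Z z * of_bool (?f z))" for z
    by (auto simp: f2_char_def f2inner_def)
  ultimately show ?thesis
    unfolding bias_inner_def fourier_coeff_def
    by (simp add: sum_subtractf sum_distrib_left[symmetric] sum_pmf_eq_1[OF finite_F2vecs Z])
qed

lemma sum_sphere_fourier_coeff_sq:
  "(\<Sum>e\<in>weight_sphere n w. (fourier_coeff n Z e)\<^sup>2) =
     (\<Sum>z\<in>F2vecs n. \<Sum>z'\<in>F2vecs n. pmf Z z * pmf Z z' * sphere_char_sum n w (f2_add z z'))"
proof -
  have "(fourier_coeff n Z e)\<^sup>2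
      = (\<Sum>z\<in>F2vecs n. \<Sum>z'\<in>F2vecs n. pmf Z z * pmf Z z' * f2_char n e (f2_add z z'))" for e
    unfolding fourier_coeff_def power2_eq_square sum_product f2_char_add by (simp add: ac_simps)
  then show ?thesis
    unfolding sphere_char_sum_def sum_distrib_left
    by (simp add: sum.swap[of _ "weight_sphere n w"])
qed

lemma sum_sphere_fourier_coeff_sq_le:
  fixes q C :: real
  assumes tv: "tv_dist_on (F2vecs k) (map_pmf (mat_vec k n G) Z) (pmf_of_set (F2vecs k)) \<le> \<epsilon>"
    and Z_vec: "set_pmf Z \<subseteq> F2vecs n"
    and kr: "\<And>i. real i \<le> real n / 2 \<Longrightarrow> \<bar>krawtchouk n w i\<bar> \<le> C * real (n choose w) * q ^ i"
    and q: "0 \<le> q" "q \<le> 1" and C: "0 \<le> C"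
  shows "(\<Sum>e\<in>weight_sphere n w. (fourier_coeff n Z e)\<^sup>2)
    \<le> real (n choose w) * (2 * (real (hamming_ball_vol n t) / 2 ^ k + \<epsilon>) + C * q ^ t)"
proof -
  let ?S = "F2vecs n" and ?p = "pmf Z" and ?B = "real (n choose w)"
  let ?R1 = "{v\<in>?S. hweight n v \<le> t}" and ?R2 = "{v\<in>?S. n - t \<le> hweight n v}"
  let ?X = "real (hamming_ball_vol n t) / 2 ^ k + \<epsilon>"
  let ?pair = "\<lambda>R. \<Sum>z\<in>?S. \<Sum>z'\<in>?S. ?p z * ?p z' * of_bool (f2_add z z' \<in> R)"
  have bound: "sphere_char_sum n w v \<le> ?B * of_bool (v \<in> ?R1) + ?B * of_bool (v \<in> ?R2) + C * ?B * q ^ t"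
    if "v \<in> ?S" for v
    using sphere_char_sum_le_split[OF kr q C, of v t] that by simp
  have "(\<Sum>e\<in>weight_sphere n w. (fourier_coeff n Z e)\<^sup>2)
      \<le> (\<Sum>z\<in>?S. \<Sum>z'\<in>?S. ?p z * ?p z' *
           (?B * of_bool (f2_add z z' \<in> ?R1) + ?B * of_bool (f2_add z z' \<in> ?R2) + C * ?B * q ^ t))"
    unfolding sum_sphere_fourier_coeff_sq
    by (intro sum_mono mult_left_mono bound f2_add_in_F2vecs) auto
  also have "\<dots> = ?B * ?pair ?R1 + ?B * ?pair ?R2 + C * ?B * q ^ t * ((\<Sum>z\<in>?S. ?p z) * (\<Sum>z'\<in>?S. ?p z'))"
  proof -
    have "?p z * ?p z' * (?B * a + ?B * b + C * ?B * q ^ t)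
        = ?B * (?p z * ?p z' * a) + ?B * (?p z * ?p z' * b) + C * ?B * q ^ t * (?p z * ?p z')"
      for z z' and a b :: real
      by (simp add: algebra_simps)
    then show ?thesis
      by (simp only: sum.distrib sum_distrib_left[symmetric] sum_product)
  qed
  also have "\<dots> \<le> ?B * ?X + ?B * ?X + C * ?B * q ^ t"
  proof -
    have "?pair ?R1 \<le> ?X"
      by (rule pair_prob_f2_add_in_le[OF tv Z_vec]) (auto simp: card_hamming_ball_le)
    moreover have "?pair ?R2 \<le> ?X"
      by (rule pair_prob_f2_add_in_le[OF tv Z_vec]) (auto simp: card_hamming_ball_compl_le)
    ultimately have "?B * ?pair ?R1 \<le> ?B * ?X" "?B * ?pair ?R2 \<le> ?B * ?X"
      by (simp_all add: mult_left_mono)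
    then show ?thesis by (simp add: sum_pmf_eq_1[OF finite_F2vecs Z_vec] add_mono)
  qed
  finally show ?thesis by (simp add: algebra_simps)
qed

lemma abs_le_sum_sqrt_bound:
  fixes b V D C Q \<epsilon> :: real
  assumes sq: "b\<^sup>2 \<le> V / 2 ^ (k + 1) + C * Q / 4 + \<epsilon> / 2"
    and dual: "2 ^ n \<le> D * 2 ^ k" and "0 \<le> V" "0 \<le> C * Q" "0 \<le> \<epsilon>" "1 \<le> n"
  shows "\<bar>b\<bar> \<le> sqrt (D * V / 2 ^ (n + 1)) + sqrt (C * real n) / 2 * sqrt Q + sqrt (\<epsilon> / 2)"
proof -
  have "V / 2 ^ (k + 1) = V * 2 ^ n / 2 ^ (n + k + 1)"
    by (simp add: power_add field_simps)
  also have "\<dots> \<le> V * (D * 2 ^ k) / 2 ^ (n + k + 1)"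
    using dual \<open>0 \<le> V\<close> by (intro divide_right_mono mult_left_mono) auto
  also have "\<dots> = D * V / 2 ^ (n + 1)"
    by (simp add: power_add field_simps)
  finally have first: "V / 2 ^ (k + 1) \<le> D * V / 2 ^ (n + 1)" .
  have "C * Q / 4 \<le> C * real n * Q / 4"
    using \<open>0 \<le> C * Q\<close> \<open>1 \<le> n\<close> mult_left_mono[of 1 "real n" "C * Q"] by (simp add: ac_simps)
  then have "sqrt (C * Q / 4) \<le> sqrt (C * real n * Q / 4)"
    by (rule real_sqrt_le_mono)
  also have "\<dots> = sqrt (C * real n) / 2 * sqrt Q"
    by (simp add: real_sqrt_divide real_sqrt_mult)
  finally have second: "sqrt (C * Q / 4) \<le> sqrt (C * real n) / 2 * sqrt Q" .
  have "\<bar>b\<bar> \<le> sqrt (V / 2 ^ (k + 1) + C * Q / 4 + \<epsilon> / 2)"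
    using real_sqrt_le_mono[OF sq] by simp
  also have "\<dots> \<le> sqrt (V / 2 ^ (k + 1)) + sqrt (C * Q / 4) + sqrt (\<epsilon> / 2)"
    using assms order.trans[OF sqrt_add_le_add_sqrt add_right_mono[OF sqrt_add_le_add_sqrt]]
    by simp
  finally show ?thesis using real_sqrt_le_mono[OF first] second by linarith
qed

lemma exists_le_of_sum_le_card_mult:
  fixes f :: "'a \<Rightarrow> real"
  assumes "finite A" "A \<noteq> {}" and "(\<Sum>x\<in>A. f x) \<le> real (card A) * M"
  shows "\<exists>x\<in>A. f x \<le> M"
proof (rule ccontr)
  assume "\<not> ?thesis"
  then have "(\<Sum>x\<in>A. M) < (\<Sum>x\<in>A. f x)"
    using assms(1,2) by (intro sum_strict_mono) (auto simp: not_le)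
  with assms(3) show False by simp
qed

lemma exists_sphere_bias_sq_le:
  fixes q C :: real
  assumes tv: "tv_dist_on (F2vecs k) (map_pmf (mat_vec k n G) Z) (pmf_of_set (F2vecs k)) \<le> \<epsilon>"
    and Z_vec: "set_pmf Z \<subseteq> F2vecs n"
    and kr: "\<And>i. real i \<le> real n / 2 \<Longrightarrow> \<bar>krawtchouk n w i\<bar> \<le> C * real (n choose w) * q ^ i"
    and q: "0 \<le> q" "q \<le> 1" and C: "0 \<le> C" and w: "w \<le> n"
  shows "\<exists>e\<in>weight_sphere n w.
    (bias_inner n e Z)\<^sup>2 \<le> real (hamming_ball_vol n t) / 2 ^ (k + 1) + C * q ^ t / 4 + \<epsilon> / 2"
proof -
  let ?M = "2 * (real (hamming_ball_vol n t) / 2 ^ k + \<epsilon>) + C * q ^ t"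
  have "finite (weight_sphere n w)"
    by (simp add: weight_sphere_def finite_F2vecs)
  moreover have "weight_sphere n w \<noteq> {}"
    using w card_weight_sphere[of n w] by auto
  moreover have "(\<Sum>e\<in>weight_sphere n w. (fourier_coeff n Z e)\<^sup>2) \<le> real (card (weight_sphere n w)) * ?M"
    using sum_sphere_fourier_coeff_sq_le[OF tv Z_vec kr q C] by (simp add: card_weight_sphere)
  ultimately obtain e where e: "e \<in> weight_sphere n w" and e_le: "(fourier_coeff n Z e)\<^sup>2 \<le> ?M"
    using exists_le_of_sum_le_card_mult by blast
  have "(bias_inner n e Z)\<^sup>2 = (fourier_coeff n Z e)\<^sup>2 / 4"
    by (simp add: bias_inner_eq_fourier_coeff[OF Z_vec] power_divide)
  also have "\<dots> \<le> ?M / 4"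
    using e_le by simp
  also have "\<dots> = real (hamming_ball_vol n t) / 2 ^ (k + 1) + C * q ^ t / 4 + \<epsilon> / 2"
    by (simp add: power_add field_simps)
  finally show ?thesis using e by blast
qed

theorem mainTheorem4:
  fixes c Cc :: real and n k w :: nat and G :: "nat \<Rightarrow> nat \<Rightarrow> bool"
    and Z :: "(nat \<Rightarrow> bool) pmf" and \<epsilon> :: real
  assumes c_range: "0 < c" "c < 1" and Cc_ge: "Cc \<ge> 1"
    and kraw: "\<And>n' w' i. n' \<ge> 1 \<Longrightarrow> real w' \<le> c * real n' \<Longrightarrow> real i \<le> real n' / 2 \<Longrightarrow>
        \<bar>krawtchouk n' w' i\<bar> \<le> Cc * real (n' choose w') * (1 - 2 * real w' / real n') ^ i"
    and k_range: "1 \<le> k" "k \<le> n - 1"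
    and rank: "full_rank k n G"
    and w_le: "real w \<le> c * real n"
    and eps_pos: "\<epsilon> > 0"
    and Z_vec: "set_pmf Z \<subseteq> F2vecs n"
    and tv: "tv_dist_on (F2vecs k) (map_pmf (mat_vec k n G) Z) (pmf_of_set (F2vecs k)) \<le> \<epsilon>"
  shows "\<exists>e \<in> F2vecs n. hweight n e = w \<and>
    \<bar>bias_inner n e Z\<bar> \<le>
      sqrt (real (card (dual_code n (gen_code k n G))) *
            real (hamming_ball_vol n ((dual_distance n (gen_code k n G) - 1) div 2)) / 2 ^ (n + 1))
      + sqrt (Cc * real n) / 2 *
          sqrt ((1 - 2 * real w / real n) ^ ((dual_distance n (gen_code k n G) - 1) div 2))
      + sqrt (\<epsilon> / 2)"
proof -
  define t where "t = (dual_distance n (gen_code k n G) - 1) div 2"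
  define q where "q = 1 - 2 * real w / real n"
  have n2: "n \<ge> 2" using k_range by linarith
  have w_le_n: "w \<le> n" using w_le c_range mult_right_mono[of c 1 "real n"] by simp
  have kr: "\<And>i. real i \<le> real n / 2 \<Longrightarrow> \<bar>krawtchouk n w i\<bar> \<le> Cc * real (n choose w) * q ^ i"
    using kraw[of n w] n2 w_le by (simp add: q_def)
  \<comment> \<open>\<open>q \<ge> 0\<close> is forced by the hypothesis at \<open>i = 1\<close>.\<close>
  have "0 \<le> Cc * real (n choose w) * q"
    using order_trans[OF abs_ge_zero kr[of 1]] n2 by simp
  moreover have "0 < Cc * real (n choose w)"
    using Cc_ge w_le_n by simp
  ultimately have q0: "0 \<le> q"
    by (simp add: zero_le_mult_iff)
  have q1: "q \<le> 1" unfolding q_def by simp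
  obtain e where e: "e \<in> weight_sphere n w"
    and bias_sq: "(bias_inner n e Z)\<^sup>2 \<le> real (hamming_ball_vol n t) / 2 ^ (k + 1) + Cc * q ^ t / 4 + \<epsilon> / 2"
    using exists_sphere_bias_sq_le[OF tv Z_vec kr q0 q1 _ w_le_n] Cc_ge by auto
  have "2 ^ n \<le> real (card (dual_code n (gen_code k n G))) * 2 ^ k"
    using of_nat_mono[OF two_pow_le_card_dual_code[of n k G]] by simp
  from abs_le_sum_sqrt_bound[OF bias_sq this] show ?thesis
    using e Cc_ge q0 eps_pos n2 unfolding weight_sphere_def t_def q_def by auto
qed

end
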